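(* Let $\mathbf A$ be a nonzero $m\times n$ real matrix and $\mathbf b\ne\mathbf 0$ such that $\mathbf A\mathbf x=\mathbf b$ is consistent, let $\alpha>0$, and let $\mathbf x^*$ be the unique solution of (P2). Let $f(\mathbf y):=-\mathbf b^\top\mathbf y+\frac{\alpha}{2}\|\mathrm{shrink}(\mathbf A^\top\mathbf y)\|_2^2$, so $\nabla f(\mathbf y)=-\mathbf b+\alpha\mathbf A\,\mathrm{shrink}(\mathbf A^\top\mathbf y)$, and let $\mathcal Y^*:=\{\mathbf y\in\mathbb R^m:\alpha\,\mathrm{shrink}(\mathbf A^\top\mathbf y)=\mathbf x^*\}$. Then for all $\mathbf y\in\mathbb R^m$, $$\langle\mathbf y-\mathrm{Proj}_{\mathcal Y^*}(\mathbf y),\nabla f(\mathbf y)\rangle\ge\nu\|\mathbf y-\mathrm{Proj}_{\mathcal Y^*}(\mathbf y)\|_2^2,\qquad \nu:=\lambda_{\mathbf A}\cdot\min_{i\in\mathrm{supp}(\mathbf x^* )}\frac{\alpha|x^*_i|}{|x^*_i|+2\alpha}>0,$$ where $\lambda_{\mathbf A}:=\min\{\lambda_{\min}^{++}(\mathbf C\mathbf C^\top):\ \mathbf C\text{ is a nonzero submatrix of }\mathbf A\text{ formed by a subset of its columns}\}$.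
   Context: Problem (P2) is $\min_{\mathbf x}\{\|\mathbf x\|_1+\frac{1}{2\alpha}\|\mathbf x\|_2^2:\ \mathbf A\mathbf x=\mathbf b\}$; $f$ is the objective of its Lagrange dual, and $\mathcal Y^*$ is the (nonempty, closed, convex) set of minimizers of $f$. $\mathrm{shrink}(\mathbf z)=\mathrm{sign}(\mathbf z)\max\{|\mathbf z|-\mathbf 1,\mathbf 0\}$ componentwise. $\mathrm{Proj}_{\mathcal Y^*}$ is Euclidean projection onto $\mathcal Y^*$. $\lambda_{\min}^{++}(\mathbf S)$ is the smallest strictly positive eigenvalue of a nonzero positive semidefinite $\mathbf S$. *)

theory Defs
  imports "HOL-Analysis.Analysis"
begin

definition shrink :: "real ^ 'n \<Rightarrow> real ^ 'n" where
  "shrink z = (\<chi> i. sgn (z $ i) * max (\<bar>z $ i\<bar> - 1) 0)"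

definition l1norm :: "real ^ 'n \<Rightarrow> real" where
  "l1norm x = (\<Sum>i\<in>UNIV. \<bar>x $ i\<bar>)"

definition P2_obj :: "real \<Rightarrow> real ^ 'n \<Rightarrow> real" where
  "P2_obj \<alpha> x = l1norm x + (1 / (2 * \<alpha>)) * (norm x)\<^sup>2"

definition P2_solution :: "real ^ 'n ^ 'm \<Rightarrow> real ^ 'm \<Rightarrow> real \<Rightarrow> real ^ 'n \<Rightarrow> bool" where
  "P2_solution A b \<alpha> x \<longleftrightarrow> A *v x = b \<and> (\<forall>z. A *v z = b \<longrightarrow> P2_obj \<alpha> x \<le> P2_obj \<alpha> z)"

definition dual_f :: "real ^ 'n ^ 'm \<Rightarrow> real ^ 'm \<Rightarrow> real \<Rightarrow> real ^ 'm \<Rightarrow> real" where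
  "dual_f A b \<alpha> y = - (b \<bullet> y) + (\<alpha> / 2) * (norm (shrink (transpose A *v y)))\<^sup>2"

definition grad_f :: "real ^ 'n ^ 'm \<Rightarrow> real ^ 'm \<Rightarrow> real \<Rightarrow> real ^ 'm \<Rightarrow> real ^ 'm" where
  "grad_f A b \<alpha> y = - b + \<alpha> *\<^sub>R (A *v shrink (transpose A *v y))"

definition Ystar :: "real ^ 'n ^ 'm \<Rightarrow> real \<Rightarrow> real ^ 'n \<Rightarrow> (real ^ 'm) set" where
  "Ystar A \<alpha> xs = {y. \<alpha> *\<^sub>R shrink (transpose A *v y) = xs}"

definition is_eigenvalue :: "real ^ 'm ^ 'm \<Rightarrow> real \<Rightarrow> bool" where
  "is_eigenvalue M c \<longleftrightarrow> (\<exists>v. v \<noteq> 0 \<and> M *v v = c *\<^sub>R v)"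

definition lambda_min_pp :: "real ^ 'm ^ 'm \<Rightarrow> real" where
  "lambda_min_pp M = Inf {c. c > 0 \<and> is_eigenvalue M c}"

text \<open>Submatrix of A formed by the columns in S (other columns set to zero;
  C C^T is unaffected by the zero columns).\<close>
definition col_sub :: "real ^ 'n ^ 'm \<Rightarrow> 'n set \<Rightarrow> real ^ 'n ^ 'm" where
  "col_sub A S = (\<chi> i j. if j \<in> S then A $ i $ j else 0)"

definition lambda_A :: "real ^ 'n ^ 'm \<Rightarrow> real" where
  "lambda_A A = Min ((\<lambda>S. lambda_min_pp (col_sub A S ** transpose (col_sub A S)))
                      ` {S. col_sub A S \<noteq> 0})"

definition supp :: "real ^ 'n \<Rightarrow> 'n set" where
  "supp x = {i. x $ i \<noteq> 0}"

definition nu_const :: "real ^ 'n ^ 'm \<Rightarrow> real \<Rightarrow> real ^ 'n \<Rightarrow> real" where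
  "nu_const A \<alpha> xs = lambda_A A *
     Min ((\<lambda>i. \<alpha> * \<bar>xs $ i\<bar> / (\<bar>xs $ i\<bar> + 2 * \<alpha>)) ` supp xs)"

end

theory Submission
  imports Defs
begin

text \<open>
  Write \<open>w = A\<^sup>T p\<close> for a dual solution
  \<open>p \<in> Y\<^sup>*\<close> and \<open>d = A\<^sup>T (y - p)\<close>. Then \<open>\<langle>y - p, \<nabla>f(y)\<rangle> = \<alpha> \<Sum>\<^sub>j d\<^sub>j (shrink(w + d)\<^sub>j - shrink(w)\<^sub>j)\<close>,
  and every summand is nonnegative by monotonicity of soft thresholding.

  Projecting \<open>y\<close> onto the polyhedron \<open>Y\<^sup>*\<close> makes \<open>y - p\<close> a normal vector, and a Farkas argument
  shows \<open>y - p = A \<mu>\<close> for a multiplier \<open>\<mu>\<close> normal to the box of admissible values of \<open>A\<^sup>T y\<close>;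
  a Caratheodory reduction makes the columns of \<open>A\<close> on the support of \<open>\<mu>\<close> independent, so
  \<open>\<lambda>\<^sub>A |\<mu>|\<^sup>2 \<le> |y - p|\<^sup>2\<close> by a Rayleigh-quotient argument on the column submatrix. On the
  coordinates where \<open>d\<close> and \<open>\<mu>\<close> agree in sign a scalar estimate for soft thresholding gives the
  summand \<open>\<ge> c d\<^sub>j\<^sup>2\<close>; Cauchy--Schwarz on \<open>|y - p|\<^sup>2 = \<langle>d, \<mu>\<rangle>\<close> then yields the bound with
  \<open>\<nu> = c \<lambda>\<^sub>A\<close>.
\<close>

text \<open>Keep \<open>A\<^sup>T y\<close> as a matrix-vector product rather than a vector-matrix product.\<close>
declare transpose_matrix_vector[simp del]

definition soft_thr :: "real \<Rightarrow> real" where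
  "soft_thr t = sgn t * max (\<bar>t\<bar> - 1) 0"

lemma shrink_component [simp]: "shrink z $ j = soft_thr (z $ j)"
  by (simp add: shrink_def soft_thr_def)

lemma soft_thr_cases: "soft_thr t = (if t > 1 then t - 1 else if t < -1 then t + 1 else 0)"
  unfolding soft_thr_def by (auto simp: sgn_if max_def)

lemma soft_thr_odd: "soft_thr (-t) = - soft_thr t"
  unfolding soft_thr_cases by auto

lemma soft_thr_mono: "a \<le> b \<Longrightarrow> soft_thr a \<le> soft_thr b"
  unfolding soft_thr_cases by auto

lemma soft_thr_monotone_product: "0 \<le> (a - b) * (soft_thr a - soft_thr b)"
proof (cases "a \<le> b")
  case True
  then show ?thesis using soft_thr_mono[OF True] by (simp add: mult_nonpos_nonpos)
next
  case False
  then show ?thesis using soft_thr_mono[of b a] by simp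
qed

definition dual_coord :: "real \<Rightarrow> real \<Rightarrow> real \<Rightarrow> bool" where
  "dual_coord \<alpha> x t \<longleftrightarrow> (x \<noteq> 0 \<longrightarrow> t = x / \<alpha> + sgn x) \<and> (x = 0 \<longrightarrow> \<bar>t\<bar> \<le> 1)"

lemma soft_thr_eq_iff:
  assumes "\<alpha> > 0"
  shows "\<alpha> * soft_thr t = x \<longleftrightarrow> dual_coord \<alpha> x t"
proof
  assume x: "\<alpha> * soft_thr t = x"
  consider "t > 1" | "t < -1" | "\<bar>t\<bar> \<le> 1" by linarith
  then show "dual_coord \<alpha> x t"
  proof cases
    case 1
    then have "x = \<alpha> * (t - 1)" "x > 0" using x assms by (auto simp: soft_thr_cases)
    then show ?thesis using assms by (simp add: dual_coord_def)
  next
    case 2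
    then have "x = \<alpha> * (t + 1)" "x < 0"
      using x assms by (auto simp: soft_thr_cases mult_pos_neg)
    then show ?thesis using assms by (simp add: dual_coord_def)
  qed (use x in \<open>auto simp: dual_coord_def soft_thr_cases\<close>)
next
  assume t: "dual_coord \<alpha> x t"
  consider "x > 0" | "x < 0" | "x = 0" by linarith
  then show "\<alpha> * soft_thr t = x"
  proof cases
    case 1
    then have "t = x / \<alpha> + 1" "x / \<alpha> > 0" using t assms by (auto simp: dual_coord_def)
    then show ?thesis using assms by (simp add: soft_thr_cases)
  next
    case 2
    then have "t = x / \<alpha> - 1" "x / \<alpha> < 0"
      using t assms by (auto simp: dual_coord_def divide_neg_pos)
    then show ?thesis using assms by (simp add: soft_thr_cases)
  qed (use t in \<open>auto simp: dual_coord_def soft_thr_cases\<close>)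
qed

text \<open>Scalar growth estimate at a support coordinate (\<open>s = x/\<alpha> > 0\<close>, \<open>t = s + 1\<close>): soft thresholding
  is strongly monotone around \<open>t\<close> with modulus \<open>s/(s+2)\<close>, uniformly in the step \<open>d\<close>.\<close>
lemma soft_thr_growth_pos:
  assumes "s > 0"
  shows "s * d\<^sup>2 \<le> (s + 2) * (d * (soft_thr (s + 1 + d) - s))"
proof -
  consider "s + 1 + d \<ge> 1" | "s + 1 + d < 1 \<and> s + 1 + d \<ge> -1" | "s + 1 + d < -1" by linarith
  then show ?thesis
  proof cases
    case 1
    then have "soft_thr (s + 1 + d) = s + d" using assms by (auto simp: soft_thr_cases)
    then show ?thesis using assms by (simp add: power2_eq_square algebra_simps)
  next
    case 2
    then have "soft_thr (s + 1 + d) = 0" by (auto simp: soft_thr_cases)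
    moreover have "(-d) * (-d) \<le> (s + 2) * (-d)"
      using 2 assms by (intro mult_right_mono) auto
    then have "s * (d * d) \<le> s * ((s + 2) * (-d))"
      using assms by (intro mult_left_mono) auto
    ultimately show ?thesis by (simp add: power2_eq_square algebra_simps)
  next
    case 3
    then have "soft_thr (s + 1 + d) = s + 2 + d" by (auto simp: soft_thr_cases)
    moreover have "0 \<le> (-d) * (-(d + s + 2))" using 3 assms by (intro mult_nonneg_nonneg) auto
    ultimately show ?thesis by (simp add: power2_eq_square algebra_simps)
  qed
qed

lemma soft_thr_growth:
  assumes "s \<noteq> 0"
  shows "\<bar>s\<bar> * d\<^sup>2 \<le> (\<bar>s\<bar> + 2) * (d * (soft_thr (s + sgn s + d) - s))"
proof (cases "s > 0")
  case True
  then show ?thesis using soft_thr_growth_pos[of s d] by simp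
next
  case False
  then have "-s > 0" using assms by simp
  from soft_thr_growth_pos[OF this, of "-d"]
  have "(-s) * (-d)\<^sup>2 \<le> (-s + 2) * ((-d) * (soft_thr (-s + 1 + -d) - (-s)))" by simp
  moreover have "soft_thr (-s + 1 + -d) = - soft_thr (s + sgn s + d)"
    using False assms soft_thr_odd[of "s + sgn s + d"] by (simp add: sgn_if algebra_simps)
  ultimately show ?thesis using False assms by (simp add: algebra_simps)
qed

lemma inner_transpose: "(transpose A *v y) \<bullet> u = y \<bullet> (A *v (u :: real^'n))"
  by (simp add: dot_lmul_matrix transpose_matrix_vector)

lemma transpose_component: "(transpose A *v y) $ j = (A *v axis j 1) \<bullet> (y :: real^'m)"
proof -
  have "(transpose A *v y) $ j = (transpose A *v y) \<bullet> axis j 1" by (simp add: inner_axis)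
  also have "\<dots> = y \<bullet> (A *v axis j 1)" by (rule inner_transpose)
  finally show ?thesis by (simp add: inner_commute)
qed

lemma inner_vec_sum: "(u :: real^'n) \<bullet> w = (\<Sum>j\<in>UNIV. u $ j * w $ j)"
  by (simp add: inner_vec_def)

lemma quadratic_nonneg_linear_zero:
  fixes H K :: real
  assumes "\<And>t. 0 \<le> 2 * t * H + t\<^sup>2 * K" "H \<ge> 0"
  shows "H = 0"
proof (rule ccontr)
  assume "H \<noteq> 0"
  then have "H > 0" using assms(2) by simp
  define D where "D = \<bar>K\<bar> + 1"
  have "D > 0" by (simp add: D_def)
  have "0 \<le> 2 * (-H/D) * H + (-H/D)\<^sup>2 * K" by (rule assms(1))
  then have "0 \<le> D\<^sup>2 * (2 * (-H/D) * H + (-H/D)\<^sup>2 * K)" by simp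
  also have "\<dots> = H\<^sup>2 * (K - 2 * D)" using \<open>D > 0\<close> by (simp add: field_simps power2_eq_square)
  finally show False using \<open>H > 0\<close> by (simp add: D_def zero_le_mult_iff)
qed

lemma rayleigh_minimizer_eigenvector:
  fixes B :: "real^'a^'b" and V :: "(real^'a) set"
  assumes sub: "subspace V" and inv: "\<And>x. x \<in> V \<Longrightarrow> transpose B *v (B *v x) \<in> V"
    and x0: "x0 \<in> V" "norm x0 = 1"
    and bound: "\<And>x. x \<in> V \<Longrightarrow> (norm (B *v x0))\<^sup>2 * (norm x)\<^sup>2 \<le> (norm (B *v x))\<^sup>2"
  shows "transpose B *v (B *v x0) = (norm (B *v x0))\<^sup>2 *\<^sub>R x0"
proof -
  define l where "l = (norm (B *v x0))\<^sup>2"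
  define h where "h = transpose B *v (B *v x0) - l *\<^sub>R x0"
  have hV: "h \<in> V" unfolding h_def using inv[OF x0(1)] x0(1) sub
    by (simp add: subspace_diff subspace_scale)
  define P where "P = (transpose B *v (B *v x0)) \<bullet> h"
  define Q where "Q = x0 \<bullet> h"
  define R where "R = h \<bullet> h"
  define N where "N = (norm (B *v h))\<^sup>2"
  have x0x0: "x0 \<bullet> x0 = 1" using x0(2) by (simp add: power2_norm_eq_inner[symmetric])
  have R: "R = P - l * Q" by (simp add: R_def P_def Q_def h_def inner_diff_left)
  have "0 \<le> 2 * t * R + t\<^sup>2 * (N - l * R)" for t
  proof -
    have "x0 + t *\<^sub>R h \<in> V" using hV x0(1) sub by (simp add: subspace_add subspace_scale)
    then have "l * (norm (x0 + t *\<^sub>R h))\<^sup>2 \<le> (norm (B *v (x0 + t *\<^sub>R h)))\<^sup>2"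
      unfolding l_def by (rule bound)
    moreover have "(norm (x0 + t *\<^sub>R h))\<^sup>2 = 1 + 2 * t * Q + t\<^sup>2 * R"
      using x0x0 unfolding power2_norm_eq_inner Q_def R_def
      by (simp add: inner_add_left inner_add_right inner_commute power2_eq_square algebra_simps)
    moreover have "(norm (B *v (x0 + t *\<^sub>R h)))\<^sup>2 = l + 2 * t * P + t\<^sup>2 * N"
      unfolding P_def N_def inner_transpose l_def power2_norm_eq_inner
      by (simp add: matrix_vector_right_distrib matrix_vector_mult_scaleR
          inner_add_left inner_add_right inner_commute algebra_simps power2_eq_square)
    moreover have "(l + 2 * t * P + t\<^sup>2 * N) - l * (1 + 2 * t * Q + t\<^sup>2 * R)
        = 2 * t * (P - l * Q) + t\<^sup>2 * (N - l * R)"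
      by (simp add: algebra_simps)
    ultimately show ?thesis using R by (smt (verit))
  qed
  then have "R = 0" by (rule quadratic_nonneg_linear_zero) (simp add: R_def)
  then show ?thesis by (simp add: R_def h_def l_def)
qed

lemma rayleigh_min_eigenvalue:
  fixes B :: "real^'a^'b" and V :: "(real^'a) set"
  assumes sub: "subspace V" and nz: "\<exists>x\<in>V. x \<noteq> 0"
    and inj: "\<And>x. x \<in> V \<Longrightarrow> B *v x = 0 \<Longrightarrow> x = 0"
    and inv: "\<And>x. x \<in> V \<Longrightarrow> transpose B *v (B *v x) \<in> V"
  shows "\<exists>l>0. (\<exists>x0\<in>V. x0 \<noteq> 0 \<and> transpose B *v (B *v x0) = l *\<^sub>R x0)
            \<and> (\<forall>x\<in>V. l * (norm x)\<^sup>2 \<le> (norm (B *v x))\<^sup>2)"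
proof -
  define K where "K = sphere (0::real^'a) 1 \<inter> V"
  have "compact K" unfolding K_def
    by (intro compact_Int_closed compact_sphere closed_subspace sub)
  have normalize: "(1 / norm x) *\<^sub>R x \<in> K" if "x \<in> V" "x \<noteq> 0" for x
    unfolding K_def using that sub by (simp add: subspace_scale)
  then have "K \<noteq> {}" using nz by blast
  have "continuous_on K (\<lambda>x. (norm (B *v x))\<^sup>2)"
    by (intro continuous_intros linear_continuous_on matrix_vector_mul_bounded_linear)
  then obtain x0 where x0K: "x0 \<in> K"
    and x0min: "\<And>u. u \<in> K \<Longrightarrow> (norm (B *v x0))\<^sup>2 \<le> (norm (B *v u))\<^sup>2"
    using continuous_attains_inf[OF \<open>compact K\<close> \<open>K \<noteq> {}\<close>] by blast
  define l where "l = (norm (B *v x0))\<^sup>2"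
  have x0V: "x0 \<in> V" and nx0: "norm x0 = 1" using x0K by (auto simp: K_def)
  then have "x0 \<noteq> 0" by auto
  then have "l > 0" using inj[OF x0V] by (auto simp: l_def)
  have bound: "l * (norm x)\<^sup>2 \<le> (norm (B *v x))\<^sup>2" if "x \<in> V" for x
  proof (cases "x = 0")
    case False
    have "l \<le> (norm (B *v ((1 / norm x) *\<^sub>R x)))\<^sup>2"
      unfolding l_def by (rule x0min[OF normalize[OF that False]])
    also have "\<dots> = (norm (B *v x))\<^sup>2 / (norm x)\<^sup>2"
      by (simp add: matrix_vector_mult_scaleR power_divide)
    finally show ?thesis using False by (simp add: field_simps)
  qed simp
  have "transpose B *v (B *v x0) = l *\<^sub>R x0"
    unfolding l_def using sub inv x0V nx0 bound[unfolded l_def]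
    by (rule rayleigh_minimizer_eigenvector)
  then show ?thesis using \<open>l > 0\<close> x0V \<open>x0 \<noteq> 0\<close> bound by blast
qed

lemma lambda_min_pp_le: "is_eigenvalue M c \<Longrightarrow> c > 0 \<Longrightarrow> lambda_min_pp M \<le> c"
  unfolding lambda_min_pp_def
  by (rule cInf_lower) (auto simp: bdd_below_def intro!: exI[of _ 0])

lemma nonzero_matrix_image: "(C :: real^'n^'m) \<noteq> 0 \<Longrightarrow> \<exists>u. C *v u \<noteq> 0"
proof (rule ccontr)
  assume "C \<noteq> 0" "\<not> (\<exists>u. C *v u \<noteq> 0)"
  then have "\<And>j. column j C = 0" by (metis matrix_vector_mult_basis)
  then show False using \<open>C \<noteq> 0\<close> by (simp add: vec_eq_iff column_def)
qed

text \<open>The smallest positive eigenvalue of a nonzero Gram matrix \<open>C C\<^sup>T\<close> exists and is positive: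
  it is the minimal Rayleigh quotient of \<open>C\<^sup>T\<close> on the column space of \<open>C\<close>.\<close>
lemma lambda_min_pp_gram_pos:
  fixes C :: "real^'n^'m"
  assumes "C \<noteq> 0"
  shows "lambda_min_pp (C ** transpose C) > 0"
proof -
  define V where "V = range (\<lambda>u. C *v u)"
  have sub: "subspace V" unfolding V_def
    by (intro linear_subspace_image subspace_UNIV matrix_vector_mul_linear)
  have nz: "\<exists>x\<in>V. x \<noteq> 0" using nonzero_matrix_image[OF assms] unfolding V_def by blast
  have inj: "x = 0" if "x \<in> V" "transpose C *v x = 0" for x
  proof -
    obtain u where u: "x = C *v u" using \<open>x \<in> V\<close> unfolding V_def by blast
    have "x \<bullet> x = (transpose C *v x) \<bullet> u" by (simp only: inner_transpose u)
    then show ?thesis using that by simp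
  qed
  have inv: "transpose (transpose C) *v (transpose C *v x) \<in> V" for x
    unfolding V_def by simp
  obtain l x0 where "l > 0" and x0: "x0 \<in> V" "x0 \<noteq> 0"
    "transpose (transpose C) *v (transpose C *v x0) = l *\<^sub>R x0"
    and bnd: "\<And>x. x \<in> V \<Longrightarrow> l * (norm x)\<^sup>2 \<le> (norm (transpose C *v x))\<^sup>2"
    using rayleigh_min_eigenvalue[of V "transpose C", OF sub nz inj inv] by blast
  have "(C ** transpose C) *v x0 = l *\<^sub>R x0"
    using x0(3) by (simp only: transpose_transpose matrix_vector_mul_assoc)
  then have ne: "{c. c > 0 \<and> is_eigenvalue (C ** transpose C) c} \<noteq> {}"
    unfolding is_eigenvalue_def using x0 \<open>l > 0\<close> by blast
  have "l \<le> c" if "c > 0" and "is_eigenvalue (C ** transpose C) c" for c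
  proof -
    obtain w where w: "w \<noteq> 0" "C *v (transpose C *v w) = c *\<^sub>R w"
      using \<open>is_eigenvalue _ c\<close> unfolding is_eigenvalue_def by (auto simp: matrix_vector_mul_assoc)
    then have "w = C *v ((1/c) *\<^sub>R (transpose C *v w))"
      using \<open>c > 0\<close> by (simp add: matrix_vector_mult_scaleR)
    then have "w \<in> V" unfolding V_def by blast
    have "c * (norm w)\<^sup>2 = w \<bullet> (C *v (transpose C *v w))"
      using w by (simp add: power2_norm_eq_inner)
    also have "\<dots> = (norm (transpose C *v w))\<^sup>2" unfolding power2_norm_eq_inner inner_transpose ..
    finally have "l * (norm w)\<^sup>2 \<le> c * (norm w)\<^sup>2" using bnd[OF \<open>w \<in> V\<close>] by simp
    then show ?thesis using w by simp
  qed
  then have "l \<le> lambda_min_pp (C ** transpose C)"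
    unfolding lambda_min_pp_def by (intro cInf_greatest ne) auto
  then show ?thesis using \<open>l > 0\<close> by simp
qed

text \<open>Keeping all columns gives back \<open>A\<close>, so \<open>\<lambda>\<^sub>A\<close> is a minimum over a nonempty finite set.\<close>
lemma col_sub_UNIV [simp]: "col_sub A UNIV = A"
  by (simp add: col_sub_def vec_eq_iff)

lemma lambda_A_pos:
  fixes A :: "real^'n^'m"
  assumes "A \<noteq> 0"
  shows "lambda_A A > 0"
proof -
  have "{S. col_sub A S \<noteq> 0} \<noteq> {}" using assms by (auto intro!: exI[of _ UNIV])
  then show ?thesis unfolding lambda_A_def
    by (subst Min_gr_iff) (auto intro: lambda_min_pp_gram_pos)
qed

lemma lambda_A_restricted_bound:
  fixes A :: "real^'n^'m" and \<mu> :: "real^'n"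
  assumes supp: "\<And>j. j \<notin> F \<Longrightarrow> \<mu> $ j = 0"
    and indep: "\<And>\<beta>. (\<forall>j. j \<notin> F \<longrightarrow> \<beta> $ j = 0) \<Longrightarrow> A *v \<beta> = 0 \<Longrightarrow> \<beta> = 0"
  shows "lambda_A A * (norm \<mu>)\<^sup>2 \<le> (norm (A *v \<mu>))\<^sup>2"
proof (cases "\<mu> = 0")
  case False
  define C where "C = col_sub A F"
  define V where "V = {x :: real^'n. \<forall>j. j \<notin> F \<longrightarrow> x $ j = 0}"
  have CA: "C *v x = A *v x" if "x \<in> V" for x
    using that unfolding C_def V_def col_sub_def matrix_vector_mult_def vec_eq_iff
    by (auto intro!: sum.cong)
  have muV: "\<mu> \<in> V" using supp by (simp add: V_def)
  have sub: "subspace V" unfolding V_def subspace_def by auto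
  have inj: "x = 0" if "x \<in> V" "C *v x = 0" for x
    using indep[of x] CA that unfolding V_def by auto
  have "C *v axis j 1 = 0" if "j \<notin> F" for j
    unfolding matrix_vector_mult_basis using that by (simp add: column_def C_def col_sub_def vec_eq_iff)
  then have "(transpose C *v y) $ j = 0" if "j \<notin> F" for y j
    using that by (simp add: transpose_component)
  then have inv: "transpose C *v (C *v x) \<in> V" for x
    unfolding V_def by blast
  obtain l x0 where "l > 0" and x0: "x0 \<in> V" "x0 \<noteq> 0" "transpose C *v (C *v x0) = l *\<^sub>R x0"
    and bnd: "\<And>x. x \<in> V \<Longrightarrow> l * (norm x)\<^sup>2 \<le> (norm (C *v x))\<^sup>2"
    using rayleigh_min_eigenvalue[of V C, OF sub _ inj inv] muV False by blast
  have Cx0: "C *v x0 \<noteq> 0" using inj x0 by blast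
  have "(C ** transpose C) *v (C *v x0) = l *\<^sub>R (C *v x0)"
    using x0(3) by (simp add: matrix_vector_mul_assoc[symmetric] matrix_vector_mult_scaleR)
  then have "is_eigenvalue (C ** transpose C) l"
    unfolding is_eigenvalue_def using Cx0 by blast
  moreover have "C \<noteq> 0" using Cx0 by auto
  ultimately have "lambda_A A \<le> l"
    unfolding lambda_A_def C_def using lambda_min_pp_le \<open>l > 0\<close>
    by (intro order.trans[OF Min_le]) auto
  then have "lambda_A A * (norm \<mu>)\<^sup>2 \<le> l * (norm \<mu>)\<^sup>2" by (simp add: mult_right_mono)
  also have "\<dots> \<le> (norm (A *v \<mu>))\<^sup>2" using bnd[OF muV] CA[OF muV] by simp
  finally show ?thesis .
qed simp

lemma Ystar_iff:
  assumes "\<alpha> > 0"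
  shows "y \<in> Ystar A \<alpha> x \<longleftrightarrow> (\<forall>j. dual_coord \<alpha> (x $ j) ((transpose A *v y) $ j))"
  unfolding Ystar_def using soft_thr_eq_iff[OF assms] by (simp add: vec_eq_iff)

text \<open>Hence \<open>Y\<^sup>*\<close> is an intersection of finitely many hyperplanes and slabs; in particular it is
  closed and convex, so the projection onto it is well behaved.\<close>
lemma Ystar_polyhedron:
  assumes "\<alpha> > 0"
  shows "polyhedron (Ystar A \<alpha> x)"
proof -
  define H where "H j = (if x $ j \<noteq> 0
      then {y. (A *v axis j 1) \<bullet> y = x $ j / \<alpha> + sgn (x $ j)}
      else {y. (A *v axis j 1) \<bullet> y \<le> 1} \<inter> {y. (A *v axis j 1) \<bullet> y \<ge> -1})" for j
  have "y \<in> H j \<longleftrightarrow> dual_coord \<alpha> (x $ j) ((transpose A *v y) $ j)" for y j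
    by (simp add: H_def dual_coord_def transpose_component abs_le_iff)
  then have "Ystar A \<alpha> x = \<Inter> (range H)"
    unfolding set_eq_iff Ystar_iff[OF assms] by auto
  moreover have "polyhedron (\<Inter> (range H))"
    by (intro polyhedron_Inter)
      (auto simp: H_def polyhedron_hyperplane polyhedron_halfspace_le polyhedron_halfspace_ge)
  ultimately show ?thesis by simp
qed

lemma row_space_separation:
  fixes A :: "real^'n^'m" and G :: "(real^'n) set"
  assumes "compact G" "convex G" "G \<noteq> {}" and miss: "\<And>y. transpose A *v y \<notin> G"
  shows "\<exists>h. A *v h = 0 \<and> (\<forall>g\<in>G. h \<bullet> g < 0)"
proof -
  define L where "L = range (\<lambda>y. transpose A *v y)"
  have subL: "subspace L" unfolding L_def
    by (intro linear_subspace_image subspace_UNIV matrix_vector_mul_linear)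
  have "L \<inter> G = {}" using miss unfolding L_def by blast
  then obtain a \<beta> where sepL: "\<forall>l\<in>L. a \<bullet> l < \<beta>" and sepG: "\<forall>g\<in>G. a \<bullet> g > \<beta>"
    using separating_hyperplane_closed_compact[OF subspace_imp_convex[OF subL]
        closed_subspace[OF subL] assms(2,1,3)] by blast
  have aL: "a \<bullet> l = 0" if "l \<in> L" for l
  proof (rule ccontr)
    assume nz: "a \<bullet> l \<noteq> 0"
    have "((\<bar>\<beta>\<bar> + 1) / (a \<bullet> l)) *\<^sub>R l \<in> L" using that subL by (simp add: subspace_scale)
    then have "a \<bullet> (((\<bar>\<beta>\<bar> + 1) / (a \<bullet> l)) *\<^sub>R l) < \<beta>" using sepL by blast
    then show False using nz by simp
  qed
  have "\<beta> > 0" using sepL subL by (metis inner_zero_right subspace_0)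
  have "transpose A *v (A *v a) \<in> L" unfolding L_def by blast
  then have "a \<bullet> (transpose A *v (A *v a)) = 0" by (rule aL)
  then have "(transpose A *v (A *v a)) \<bullet> a = 0" by (simp only: inner_commute)
  then have "A *v a = 0" by (simp only: inner_transpose inner_eq_zero_iff)
  then have "A *v (0 - a) = 0" by (simp only: matrix_vector_mult_diff_distrib) simp
  moreover have "\<forall>g\<in>G. (0 - a) \<bullet> g < 0" using sepG \<open>\<beta> > 0\<close> by (simp add: less_trans)
  ultimately show ?thesis by blast
qed

lemma small_step:
  fixes a c :: "'i :: finite \<Rightarrow> real"
  assumes "b > 0" and a_pos: "\<And>j. P j \<Longrightarrow> a j > 0"
  shows "\<exists>t>0. t \<le> b \<and> (\<forall>j. P j \<longrightarrow> t * \<bar>c j\<bar> \<le> a j)"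
proof -
  define T where "T = insert b ((\<lambda>j. a j / (\<bar>c j\<bar> + 1)) ` {j. P j})"
  define t where "t = Min T"
  have "finite T" by (simp add: T_def)
  then have "t > 0" unfolding t_def using assms
    by (subst Min_gr_iff) (auto simp: T_def add_nonneg_pos)
  have "t \<le> b" unfolding t_def using \<open>finite T\<close> by (intro Min_le) (auto simp: T_def)
  moreover have "t * \<bar>c j\<bar> \<le> a j" if "P j" for j
  proof -
    have "t \<le> a j / (\<bar>c j\<bar> + 1)" unfolding t_def using \<open>finite T\<close> that by (simp add: T_def)
    then have "t * (\<bar>c j\<bar> + 1) \<le> a j" by (simp add: pos_le_divide_eq add_nonneg_pos)
    then show ?thesis using \<open>t > 0\<close> by (simp add: algebra_simps)
  qed
  ultimately show ?thesis using \<open>t > 0\<close> by blast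
qed

lemma abs_add_small:
  fixes x h t :: real
  assumes "t > 0" "x \<noteq> 0 \<longrightarrow> t * \<bar>h\<bar> \<le> \<bar>x\<bar>"
  shows "\<bar>x + t * h\<bar> = \<bar>x\<bar> + t * (if x \<noteq> 0 then sgn x * h else \<bar>h\<bar>)"
proof -
  have th: "\<bar>t * h\<bar> = t * \<bar>h\<bar>" using assms(1) by (simp add: abs_mult)
  consider "x = 0" | "x > 0" | "x < 0" by linarith
  then show ?thesis
  proof cases
    case 2
    then have "x + t * h \<ge> 0" using assms th by (auto simp: abs_le_iff)
    then show ?thesis using 2 by simp
  next
    case 3
    then have "x + t * h \<le> 0" using assms th by (auto simp: abs_le_iff)
    then show ?thesis using 3 by simp
  qed (use th in simp)
qed

lemma P2_first_order:
  fixes A :: "real^'n^'m"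
  assumes "\<alpha> > 0" and sol: "P2_solution A b \<alpha> x" and Ah: "A *v h = 0"
  shows "0 \<le> (\<Sum>j\<in>UNIV. if x $ j \<noteq> 0 then sgn (x $ j) * h $ j else \<bar>h $ j\<bar>) + x \<bullet> h / \<alpha>"
proof (rule ccontr)
  define S where "S = (\<Sum>j\<in>UNIV. if x $ j \<noteq> 0 then sgn (x $ j) * h $ j else \<bar>h $ j\<bar>) + x \<bullet> h / \<alpha>"
  assume "\<not> 0 \<le> (\<Sum>j\<in>UNIV. if x $ j \<noteq> 0 then sgn (x $ j) * h $ j else \<bar>h $ j\<bar>) + x \<bullet> h / \<alpha>"
  then have S: "- \<alpha> * S > 0" using assms(1) by (simp add: S_def mult_pos_neg)
  have D: "(norm h)\<^sup>2 + 1 > 0" by (simp add: add_nonneg_pos)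
  have "\<exists>t>0. t \<le> - \<alpha> * S / ((norm h)\<^sup>2 + 1) \<and> (\<forall>j. x $ j \<noteq> 0 \<longrightarrow> t * \<bar>h $ j\<bar> \<le> \<bar>x $ j\<bar>)"
    by (rule small_step) (use S D in \<open>auto simp: divide_neg_pos\<close>)
  then obtain t where "t > 0" and t_bound: "t \<le> - \<alpha> * S / ((norm h)\<^sup>2 + 1)"
    and "\<forall>j. x $ j \<noteq> 0 \<longrightarrow> t * \<bar>h $ j\<bar> \<le> \<bar>x $ j\<bar>" by blast
  then have "\<bar>(x + t *\<^sub>R h) $ j\<bar> = \<bar>x $ j\<bar> + t * (if x $ j \<noteq> 0 then sgn (x $ j) * h $ j else \<bar>h $ j\<bar>)" for j
    using abs_add_small[OF \<open>t > 0\<close>] by simp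
  then have l1: "l1norm (x + t *\<^sub>R h) = l1norm x + t * (S - x \<bullet> h / \<alpha>)"
    unfolding l1norm_def S_def by (simp add: sum.distrib sum_distrib_left)
  have n2: "(norm (x + t *\<^sub>R h))\<^sup>2 = (norm x)\<^sup>2 + 2 * t * (x \<bullet> h) + t\<^sup>2 * (norm h)\<^sup>2"
    unfolding power2_norm_eq_inner
    by (simp add: inner_add_left inner_add_right inner_commute power2_eq_square algebra_simps)
  from t_bound have "t * ((norm h)\<^sup>2 + 1) \<le> - \<alpha> * S" by (simp only: pos_le_divide_eq[OF D])
  then have "t * (norm h)\<^sup>2 + t \<le> - \<alpha> * S" by (simp add: distrib_left)
  then have "t * (norm h)\<^sup>2 < - 2 * \<alpha> * S" using S \<open>t > 0\<close> by linarith
  then have "t * (t * (norm h)\<^sup>2) < t * (- 2 * \<alpha> * S)"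
    using \<open>t > 0\<close> by (rule mult_strict_left_mono)
  then have "t\<^sup>2 * (norm h)\<^sup>2 < (- t * S) * (2 * \<alpha>)"
    by (simp add: power2_eq_square algebra_simps)
  then have decrease: "t\<^sup>2 * (norm h)\<^sup>2 / (2 * \<alpha>) < - t * S"
    using assms(1) by (subst pos_divide_less_eq) auto
  have "1 / (2 * \<alpha>) * (2 * t * (x \<bullet> h)) = t * (x \<bullet> h / \<alpha>)" using assms(1) by simp
  then have expand: "P2_obj \<alpha> (x + t *\<^sub>R h) = P2_obj \<alpha> x + t * S + t\<^sup>2 * (norm h)\<^sup>2 / (2 * \<alpha>)"
    unfolding P2_obj_def l1 n2 by (simp add: algebra_simps)
  have "A *v (x + t *\<^sub>R h) = A *v x" using Ah
    by (simp add: matrix_vector_right_distrib matrix_vector_mult_scaleR)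
  then have "P2_obj \<alpha> x \<le> P2_obj \<alpha> (x + t *\<^sub>R h)" using sol unfolding P2_solution_def by metis
  then show False using decrease expand by linarith
qed

text \<open>Otherwise the box of admissible values of \<open>A\<^sup>T y\<close> would
  be separated from the row space of \<open>A\<close> by a null-space direction of descent for (P2).\<close>
lemma Ystar_nonempty:
  fixes A :: "real^'n^'m"
  assumes "\<alpha> > 0" and sol: "P2_solution A b \<alpha> x"
  shows "Ystar A \<alpha> x \<noteq> {}"
proof
  assume empty: "Ystar A \<alpha> x = {}"
  define e where "e j = x $ j / \<alpha> + sgn (x $ j)" for j
  define G where "G = cbox (\<chi> j. if x $ j \<noteq> 0 then e j else -1) (\<chi> j. if x $ j \<noteq> 0 then e j else 1)"
  have memG: "g \<in> G \<longleftrightarrow> (\<forall>j. dual_coord \<alpha> (x $ j) (g $ j))" for g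
    unfolding G_def mem_box_cart dual_coord_def e_def by (auto simp: abs_le_iff)
  have "(\<chi> j. if x $ j \<noteq> 0 then e j else 0) \<in> G" unfolding memG dual_coord_def e_def by simp
  then have "G \<noteq> {}" by blast
  moreover have "transpose A *v y \<notin> G" for y
    using empty memG Ystar_iff[OF assms(1)] by blast
  moreover have "compact G" "convex G" unfolding G_def by (simp_all add: compact_cbox convex_box)
  ultimately obtain h where Ah: "A *v h = 0" and hG: "\<forall>g\<in>G. h \<bullet> g < 0"
    using row_space_separation[of G A] by blast
  define g0 :: "real^'n" where "g0 = (\<chi> j. if x $ j \<noteq> 0 then e j else sgn (h $ j))"
  have "g0 \<in> G" unfolding memG dual_coord_def g0_def e_def by (simp add: abs_sgn_eq)
  then have "h \<bullet> g0 < 0" using hG by blast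
  moreover have "h $ j * g0 $ j = (if x $ j \<noteq> 0 then sgn (x $ j) * h $ j else \<bar>h $ j\<bar>) + x $ j * h $ j / \<alpha>" for j
    by (cases "x $ j = 0") (simp_all add: g0_def e_def abs_sgn algebra_simps)
  then have "h \<bullet> g0 = (\<Sum>j\<in>UNIV. if x $ j \<noteq> 0 then sgn (x $ j) * h $ j else \<bar>h $ j\<bar>) + x \<bullet> h / \<alpha>"
    unfolding inner_vec_sum by (simp add: sum.distrib sum_divide_distrib)
  ultimately show False using P2_first_order[OF assms Ah] by linarith
qed

lemma finite_cone_separation:
  fixes v :: "'a :: euclidean_space"
  assumes "finite Gen" "v \<notin> convex_cone hull Gen"
  shows "\<exists>h. h \<bullet> v > 0 \<and> (\<forall>g\<in>Gen. h \<bullet> g \<le> 0)"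
proof -
  define H where "H = convex_cone hull Gen"
  obtain a \<beta> where av: "a \<bullet> v < \<beta>" and aH: "\<forall>z\<in>H. a \<bullet> z > \<beta>"
    using separating_hyperplane_closed_point[of H v] assms convex_convex_cone_hull
      closed_convex_cone_hull[OF assms(1)] unfolding H_def by blast
  have "\<beta> < 0" using aH convex_cone_hull_contains_0 unfolding H_def by fastforce
  have "a \<bullet> g \<ge> 0" if "g \<in> Gen" for g
  proof (rule ccontr)
    assume neg: "\<not> a \<bullet> g \<ge> 0"
    define r where "r = (\<bar>\<beta>\<bar> + 1) / (- (a \<bullet> g))"
    have "r \<ge> 0" using neg unfolding r_def by (intro divide_nonneg_pos) auto
    moreover have "g \<in> H" unfolding H_def using that by (simp add: hull_inc)
    ultimately have "r *\<^sub>R g \<in> H" unfolding H_def by (simp add: conicD conic_convex_cone_hull)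
    then have "a \<bullet> (r *\<^sub>R g) > \<beta>" using aH by blast
    moreover have "a \<bullet> (r *\<^sub>R g) = - (\<bar>\<beta>\<bar> + 1)" using neg by (simp add: r_def)
    ultimately show False using \<open>\<beta> < 0\<close> by simp
  qed
  then have "(- a) \<bullet> v > 0 \<and> (\<forall>g\<in>Gen. (- a) \<bullet> g \<le> 0)" using av \<open>\<beta> < 0\<close> by simp
  then show ?thesis by blast
qed

lemma Ystar_feasible_direction:
  fixes A :: "real^'n^'m" and p h :: "real^'m"
  defines "w \<equiv> transpose A *v p" and "c \<equiv> transpose A *v h"
  assumes "\<alpha> > 0" and pY: "p \<in> Ystar A \<alpha> x"
    and c_supp: "\<And>j. x $ j \<noteq> 0 \<Longrightarrow> c $ j = 0"
    and c_upper: "\<And>j. x $ j = 0 \<Longrightarrow> w $ j = 1 \<Longrightarrow> c $ j \<le> 0"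
    and c_lower: "\<And>j. x $ j = 0 \<Longrightarrow> w $ j = -1 \<Longrightarrow> c $ j \<ge> 0"
  shows "\<exists>t>0. p + t *\<^sub>R h \<in> Ystar A \<alpha> x"
proof -
  have wok: "dual_coord \<alpha> (x $ j) (w $ j)" for j
    using pY by (simp add: w_def Ystar_iff[OF assms(3)])
  have "\<exists>t>0. t \<le> 1 \<and> (\<forall>j. True \<longrightarrow> t * \<bar>c $ j\<bar> \<le> (if \<bar>w $ j\<bar> < 1 then 1 - \<bar>w $ j\<bar> else 1))"
    by (rule small_step) auto
  then obtain t where "t > 0"
    and t_bound: "\<forall>j. t * \<bar>c $ j\<bar> \<le> (if \<bar>w $ j\<bar> < 1 then 1 - \<bar>w $ j\<bar> else 1)" by auto
  have t1: "t * \<bar>c $ j\<bar> \<le> 1" for j using t_bound[rule_format, of j] by (auto split: if_splits)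
  have t2: "t * \<bar>c $ j\<bar> \<le> 1 - \<bar>w $ j\<bar>" if "\<bar>w $ j\<bar> < 1" for j
    using t_bound[rule_format, of j] that by simp
  have tc: "\<bar>t * c $ j\<bar> = t * \<bar>c $ j\<bar>" for j using \<open>t > 0\<close> by (simp add: abs_mult)
  have move: "(transpose A *v (p + t *\<^sub>R h)) $ j = w $ j + t * c $ j" for j
    by (simp add: w_def c_def matrix_vector_right_distrib matrix_vector_mult_scaleR)
  have "dual_coord \<alpha> (x $ j) (w $ j + t * c $ j)" for j
  proof (cases "x $ j = 0")
    case True
    then have "\<bar>w $ j\<bar> \<le> 1" using wok[of j] by (simp add: dual_coord_def)
    then consider "w $ j = 1" | "w $ j = -1" | "\<bar>w $ j\<bar> < 1" by linarith
    then have "\<bar>w $ j + t * c $ j\<bar> \<le> 1"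
    proof cases
      case 1
      then have "t * c $ j \<le> 0" using c_upper[OF True] \<open>t > 0\<close> by (simp add: mult_nonneg_nonpos)
      then show ?thesis using 1 t1[of j] tc[of j] abs_ge_minus_self[of "t * c $ j"] unfolding abs_le_iff by linarith
    next
      case 2
      then have "t * c $ j \<ge> 0" using c_lower[OF True] \<open>t > 0\<close> by simp
      then show ?thesis using 2 t1[of j] tc[of j] abs_ge_self[of "t * c $ j"] unfolding abs_le_iff by linarith
    next
      case 3
      then show ?thesis using t2[OF 3] tc[of j] abs_triangle_ineq[of "w $ j" "t * c $ j"] by linarith
    qed
    then show ?thesis using True by (simp add: dual_coord_def)
  qed (use wok c_supp in simp)
  then have "p + t *\<^sub>R h \<in> Ystar A \<alpha> x" by (simp add: move Ystar_iff[OF assms(3)])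
  then show ?thesis using \<open>t > 0\<close> by blast
qed

text \<open>\<open>\<mu>\<close> is a normal vector of the box \<open>{g. \<forall>j. dual_coord \<alpha> (x\<^sub>j) (g\<^sub>j)}\<close> at \<open>w\<close>: it vanishes on
  inactive off-support coordinates and has the sign of the active bound \<open>w\<^sub>j = \<plusminus>1\<close>.\<close>
definition sign_compatible :: "real^'n \<Rightarrow> real^'n \<Rightarrow> real^'n \<Rightarrow> bool" where
  "sign_compatible w x \<mu> \<longleftrightarrow> (\<forall>j. x $ j = 0 \<longrightarrow>
     (\<bar>w $ j\<bar> < 1 \<longrightarrow> \<mu> $ j = 0) \<and> (w $ j = 1 \<longrightarrow> \<mu> $ j \<ge> 0) \<and> (w $ j = -1 \<longrightarrow> \<mu> $ j \<le> 0))"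

lemma sign_compatible_convex_cone: "convex_cone {\<mu>. sign_compatible w x \<mu>}"
  unfolding convex_cone_def convex_def conic_def sign_compatible_def
  by (auto simp: mult_nonneg_nonpos add_nonpos_nonpos exI[of _ 0])

text \<open>The cone of such \<open>A \<mu>\<close> is finitely generated; if \<open>v\<close> were
  outside, Farkas' lemma would give a feasible direction \<open>h\<close> with \<open>v \<bullet> h > 0\<close>.\<close>
lemma Ystar_normal_cone:
  fixes A :: "real^'n^'m" and p v :: "real^'m"
  assumes "\<alpha> > 0" and pY: "p \<in> Ystar A \<alpha> x"
    and normal: "\<And>q. q \<in> Ystar A \<alpha> x \<Longrightarrow> v \<bullet> (q - p) \<le> 0"
  shows "\<exists>\<mu>. A *v \<mu> = v \<and> sign_compatible (transpose A *v p) x \<mu>"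
proof -
  define w where "w = transpose A *v p"
  define I where "I = {(j, \<sigma>). \<sigma> \<in> {-1, 1 :: real} \<and> (x $ j \<noteq> 0 \<or> w $ j = \<sigma>)}"
  define Gen where "Gen = (\<lambda>(j, \<sigma>). A *v (\<sigma> *\<^sub>R axis j 1)) ` I"
  define K where "K = (\<lambda>\<mu>. A *v \<mu>) ` {\<mu>. sign_compatible w x \<mu>}"
  have "finite I" by (rule finite_subset[of _ "UNIV \<times> {-1, 1}"]) (auto simp: I_def)
  then have "finite Gen" by (simp add: Gen_def)
  have "convex_cone K" unfolding K_def
    by (intro convex_cone_linear_image conjI sign_compatible_convex_cone matrix_vector_mul_linear)
  moreover have "Gen \<subseteq> K"
    unfolding Gen_def K_def I_def sign_compatible_def by (auto simp: axis_def)
  ultimately have hullK: "convex_cone hull Gen \<subseteq> K" by (intro hull_minimal)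
  have "v \<in> convex_cone hull Gen"
  proof (rule ccontr)
    assume "v \<notin> convex_cone hull Gen"
    then obtain h where hv: "h \<bullet> v > 0" and hGen: "\<forall>g\<in>Gen. h \<bullet> g \<le> 0"
      using finite_cone_separation[OF \<open>finite Gen\<close>] by blast
    define c where "c = transpose A *v h"
    have sc: "\<sigma> * c $ j \<le> 0" if "(j, \<sigma>) \<in> I" for j \<sigma>
    proof -
      have "h \<bullet> (A *v (\<sigma> *\<^sub>R axis j 1)) \<le> 0" using hGen that unfolding Gen_def by force
      then show ?thesis by (simp add: c_def transpose_component matrix_vector_mult_scaleR inner_commute)
    qed
    have "\<exists>t>0. p + t *\<^sub>R h \<in> Ystar A \<alpha> x"
    proof (rule Ystar_feasible_direction[OF assms(1) pY])
      show "(transpose A *v h) $ j = 0" if "x $ j \<noteq> 0" for j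
        using sc[of j 1] sc[of j "-1"] that by (simp add: I_def c_def)
      show "(transpose A *v h) $ j \<le> 0" if "x $ j = 0" "(transpose A *v p) $ j = 1" for j
        using sc[of j 1] that by (simp add: I_def c_def w_def)
      show "(transpose A *v h) $ j \<ge> 0" if "x $ j = 0" "(transpose A *v p) $ j = -1" for j
        using sc[of j "-1"] that by (simp add: I_def c_def w_def)
    qed
    then obtain t where "t > 0" and "p + t *\<^sub>R h \<in> Ystar A \<alpha> x" by blast
    then have "v \<bullet> (t *\<^sub>R h) \<le> 0" using normal by fastforce
    moreover have "v \<bullet> (t *\<^sub>R h) > 0" using \<open>t > 0\<close> hv by (simp add: inner_commute)
    ultimately show False by simp
  qed
  then show ?thesis using hullK unfolding K_def w_def by blast
qed

definition conformal :: "real^'n \<Rightarrow> real^'n \<Rightarrow> bool" where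
  "conformal \<mu>' \<mu> \<longleftrightarrow> (\<forall>j. 0 \<le> \<mu>' $ j * \<mu> $ j \<and> (\<mu> $ j = 0 \<longrightarrow> \<mu>' $ j = 0))"

lemma sign_compatible_conformal:
  "sign_compatible w x \<mu> \<Longrightarrow> conformal \<mu>' \<mu> \<Longrightarrow> sign_compatible w x \<mu>'"
  unfolding sign_compatible_def conformal_def
  by (metis linorder_not_less nle_le zero_le_mult_iff)

text \<open>Reduction step in the proof of Caratheodory's theorem: moving \<open>\<mu>\<close> along a null vector \<open>\<beta>\<close>
  of \<open>A\<close> supported in \<open>supp \<mu>\<close> until the first coordinate hits zero keeps \<open>A \<mu>\<close>, stays
  conformal and shrinks the support.\<close>
lemma conformal_reduction_step:
  fixes A :: "real^'n^'m" and \<mu> \<beta> :: "real^'n"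
  assumes supp: "\<And>j. \<mu> $ j = 0 \<Longrightarrow> \<beta> $ j = 0" and null: "A *v \<beta> = 0"
    and aligned: "\<exists>j. \<mu> $ j * \<beta> $ j > 0"
  shows "\<exists>\<mu>'. A *v \<mu>' = A *v \<mu> \<and> conformal \<mu>' \<mu> \<and> card (supp \<mu>') < card (supp \<mu>)"
proof -
  define P where "P = {j. \<mu> $ j * \<beta> $ j > 0}"
  have "finite P" "P \<noteq> {}" using aligned by (auto simp: P_def)
  define t where "t = Min ((\<lambda>j. \<mu> $ j / \<beta> $ j) ` P)"
  have "t \<in> (\<lambda>j. \<mu> $ j / \<beta> $ j) ` P"
    unfolding t_def using \<open>finite P\<close> \<open>P \<noteq> {}\<close> by (intro Min_in) auto
  then obtain j0 where j0: "j0 \<in> P" "t = \<mu> $ j0 / \<beta> $ j0" by blast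
  have tle: "t \<le> \<mu> $ j / \<beta> $ j" if "j \<in> P" for j unfolding t_def using \<open>finite P\<close> that by simp
  have "t > 0" using j0 by (simp add: P_def zero_less_divide_iff zero_less_mult_iff)
  define \<mu>' where "\<mu>' = \<mu> - t *\<^sub>R \<beta>"
  have "A *v \<mu>' = A *v \<mu>"
    using null by (simp add: \<mu>'_def matrix_vector_mult_diff_distrib matrix_vector_mult_scaleR)
  moreover have "t * (\<mu> $ j * \<beta> $ j) \<le> \<mu> $ j * \<mu> $ j" for j
  proof (cases "j \<in> P")
    case True
    then have "\<mu> $ j * \<beta> $ j > 0" by (simp add: P_def)
    then have "t * (\<mu> $ j * \<beta> $ j) \<le> (\<mu> $ j / \<beta> $ j) * (\<mu> $ j * \<beta> $ j)"
      using tle[OF True] by (intro mult_right_mono) auto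
    also have "\<dots> = \<mu> $ j * \<mu> $ j" using \<open>\<mu> $ j * \<beta> $ j > 0\<close> by (auto simp: field_simps)
    finally show ?thesis .
  next
    case False
    then have "t * (\<mu> $ j * \<beta> $ j) \<le> 0"
      using \<open>t > 0\<close> by (simp add: P_def mult_nonneg_nonpos)
    then show ?thesis by (smt (verit) zero_le_square)
  qed
  then have "conformal \<mu>' \<mu>"
    using supp unfolding conformal_def by (simp add: \<mu>'_def algebra_simps)
  moreover have "\<mu>' $ j0 = 0" "\<mu> $ j0 \<noteq> 0" using j0 by (auto simp: \<mu>'_def P_def)
  then have "supp \<mu>' \<subset> supp \<mu>"
    using \<open>conformal \<mu>' \<mu>\<close> unfolding supp_def conformal_def by blast
  then have "card (supp \<mu>') < card (supp \<mu>)" by (intro psubset_card_mono) auto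
  ultimately show ?thesis by blast
qed

text \<open>Caratheodory-type reduction: among the representations \<open>A \<mu> = v\<close> with \<open>\<mu>\<close> in a set closed
  under conformal reduction, one of minimal support uses linearly independent columns of \<open>A\<close>.\<close>
lemma independent_support_representation:
  fixes A :: "real^'n^'m"
  assumes "A *v \<mu>0 = v" "Q \<mu>0" and closed: "\<And>\<mu> \<mu>'. Q \<mu> \<Longrightarrow> conformal \<mu>' \<mu> \<Longrightarrow> Q \<mu>'"
  shows "\<exists>\<mu>. A *v \<mu> = v \<and> Q \<mu> \<and>
           (\<forall>\<beta>. (\<forall>j. j \<notin> supp \<mu> \<longrightarrow> \<beta> $ j = 0) \<longrightarrow> A *v \<beta> = 0 \<longrightarrow> \<beta> = 0)"
proof -
  obtain \<mu> where good: "A *v \<mu> = v \<and> Q \<mu>"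
    and least: "\<And>\<mu>'. A *v \<mu>' = v \<and> Q \<mu>' \<Longrightarrow> card (supp \<mu>) \<le> card (supp \<mu>')"
    using ex_has_least_nat[of "\<lambda>\<mu>. A *v \<mu> = v \<and> Q \<mu>" \<mu>0 "\<lambda>\<mu>. card (supp \<mu>)"] assms(1,2)
    by blast
  have "\<beta> = 0" if sb: "\<forall>j. j \<notin> supp \<mu> \<longrightarrow> \<beta> $ j = 0" and "A *v \<beta> = 0" for \<beta>
  proof (rule ccontr)
    assume "\<beta> \<noteq> 0"
    then obtain j where "\<beta> $ j \<noteq> 0" by (auto simp: vec_eq_iff)
    then have "\<mu> $ j \<noteq> 0" using sb by (auto simp: supp_def)
    define \<beta>' where "\<beta>' = (if \<mu> $ j * \<beta> $ j > 0 then \<beta> else - \<beta>)"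
    have "\<mu> $ j * \<beta>' $ j > 0"
      using \<open>\<beta> $ j \<noteq> 0\<close> \<open>\<mu> $ j \<noteq> 0\<close>
      by (auto simp: \<beta>'_def zero_less_mult_iff mult_less_0_iff linorder_neq_iff)
    moreover have "\<mu> $ i = 0 \<Longrightarrow> \<beta>' $ i = 0" for i using sb by (simp add: \<beta>'_def supp_def)
    moreover have "A *v \<beta>' = 0"
      using \<open>A *v \<beta> = 0\<close> matrix_vector_mult_diff_distrib[of A 0 \<beta>] by (simp add: \<beta>'_def)
    ultimately obtain \<mu>' where "A *v \<mu>' = A *v \<mu>" "conformal \<mu>' \<mu>" "card (supp \<mu>') < card (supp \<mu>)"
      using conformal_reduction_step[of \<mu> \<beta>' A] by blast
    then show False using least[of \<mu>'] closed good by fastforce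
  qed
  then show ?thesis using good by blast
qed

lemma soft_thr_coordinate_bound:
  assumes "\<alpha> > 0" and w: "dual_coord \<alpha> x w" and "c \<le> \<alpha>"
    and c_supp: "x \<noteq> 0 \<Longrightarrow> c \<le> \<alpha> * \<bar>x\<bar> / (\<bar>x\<bar> + 2 * \<alpha>)"
    and m: "x = 0 \<Longrightarrow> (\<bar>w\<bar> < 1 \<longrightarrow> m = 0) \<and> (w = 1 \<longrightarrow> m \<ge> 0) \<and> (w = -1 \<longrightarrow> m \<le> 0)"
    and "d * m > 0"
  shows "c * d\<^sup>2 \<le> \<alpha> * (d * (soft_thr (w + d) - soft_thr w))"
proof (cases "x = 0")
  case False
  define s where "s = x / \<alpha>"
  have "s \<noteq> 0" "sgn s = sgn x" using False \<open>\<alpha> > 0\<close> by (simp_all add: s_def sgn_divide)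
  then have "w = s + sgn s" using w False by (simp add: dual_coord_def s_def)
  moreover have "soft_thr w = s"
    using w soft_thr_eq_iff[OF \<open>\<alpha> > 0\<close>] \<open>\<alpha> > 0\<close> by (simp add: s_def field_simps)
  ultimately have "\<bar>s\<bar> * d\<^sup>2 \<le> (\<bar>s\<bar> + 2) * (d * (soft_thr (w + d) - soft_thr w))"
    using soft_thr_growth[OF \<open>s \<noteq> 0\<close>, of d] by simp
  then have "\<bar>s\<bar> * d\<^sup>2 / (\<bar>s\<bar> + 2) \<le> d * (soft_thr (w + d) - soft_thr w)"
    by (simp add: divide_le_eq mult.commute add_nonneg_pos)
  then have "\<alpha> * (\<bar>s\<bar> * d\<^sup>2 / (\<bar>s\<bar> + 2)) \<le> \<alpha> * (d * (soft_thr (w + d) - soft_thr w))"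
    using \<open>\<alpha> > 0\<close> by (intro mult_left_mono) auto
  moreover have "\<alpha> * (\<bar>s\<bar> * d\<^sup>2 / (\<bar>s\<bar> + 2)) = (\<alpha> * \<bar>x\<bar> / (\<bar>x\<bar> + 2 * \<alpha>)) * d\<^sup>2"
    using \<open>\<alpha> > 0\<close> by (simp add: s_def abs_divide field_simps)
  moreover have "c * d\<^sup>2 \<le> (\<alpha> * \<bar>x\<bar> / (\<bar>x\<bar> + 2 * \<alpha>)) * d\<^sup>2"
    using c_supp[OF False] by (intro mult_right_mono) auto
  ultimately show ?thesis by simp
next
  case True
  have "m \<noteq> 0" using \<open>d * m > 0\<close> by auto
  then consider "w = 1" "d > 0" | "w = -1" "d < 0"
    using m[OF True] w True \<open>d * m > 0\<close>
    by (auto simp: dual_coord_def zero_less_mult_iff abs_le_iff)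
  then have "\<alpha> * (d * (soft_thr (w + d) - soft_thr w)) = \<alpha> * d\<^sup>2"
    by cases (simp_all add: soft_thr_cases power2_eq_square)
  moreover have "c * d\<^sup>2 \<le> \<alpha> * d\<^sup>2" using \<open>c \<le> \<alpha>\<close> by (intro mult_right_mono) auto
  ultimately show ?thesis by linarith
qed

text \<open>At \<open>p \<in> Y\<^sup>*\<close> we have \<open>b = A x = \<alpha> A shrink(A\<^sup>T p)\<close>, so \<open>\<langle>y - p, \<nabla>f(y)\<rangle>\<close> is a sum of
  coordinate increments of the soft-thresholding map.\<close>
lemma gradient_inner_Ystar:
  fixes A :: "real^'n^'m" and p y :: "real^'m"
  defines "w \<equiv> transpose A *v p" and "d \<equiv> transpose A *v (y - p)"
  assumes "A *v x = b" and "p \<in> Ystar A \<alpha> x"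
  shows "(y - p) \<bullet> grad_f A b \<alpha> y = (\<Sum>j\<in>UNIV. \<alpha> * (d $ j * (soft_thr (w $ j + d $ j) - soft_thr (w $ j))))"
proof -
  have "transpose A *v y = w + d" by (simp add: w_def d_def matrix_vector_mult_diff_distrib)
  moreover have "x = \<alpha> *\<^sub>R shrink w" using assms(4) by (simp add: Ystar_def w_def)
  then have "b = \<alpha> *\<^sub>R (A *v shrink w)" using assms(3) by (simp add: matrix_vector_mult_scaleR)
  ultimately have "grad_f A b \<alpha> y = \<alpha> *\<^sub>R (A *v (shrink (w + d) - shrink w))"
    unfolding grad_f_def by (simp add: matrix_vector_mult_diff_distrib algebra_simps)
  then have "(y - p) \<bullet> grad_f A b \<alpha> y = \<alpha> * (d \<bullet> (shrink (w + d) - shrink w))"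
    unfolding d_def inner_transpose by simp
  then show ?thesis unfolding inner_vec_sum by (simp add: sum_distrib_left)
qed

text \<open>Elementary transfer of the restricted bound: from \<open>N \<le> R M\<close> and \<open>l M\<^sup>2 \<le> N\<close> we get \<open>l N \<le> R\<^sup>2\<close>;
  used with \<open>N = |y - p|\<^sup>2\<close>, \<open>R = |\<rho>|\<close>, \<open>M = |\<mu>|\<close>, \<open>l = \<lambda>\<^sub>A\<close>.\<close>
lemma restricted_norm_transfer:
  fixes N R M l :: real
  assumes "N \<le> R * M" "l * M\<^sup>2 \<le> N" "l > 0" "N \<ge> 0" "R \<ge> 0" "M \<ge> 0"
  shows "l * N \<le> R\<^sup>2"
proof (cases "N = 0")
  case False
  then have "N > 0" using assms by simp
  have "N\<^sup>2 \<le> (R * M)\<^sup>2" using assms(1,4) by (intro power_mono) auto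
  then have "l * N\<^sup>2 \<le> R\<^sup>2 * (l * M\<^sup>2)" using assms(3) by (simp add: power_mult_distrib)
  also have "\<dots> \<le> R\<^sup>2 * N" using assms(2) by (intro mult_left_mono) auto
  finally show ?thesis using \<open>N > 0\<close> by (simp add: power2_eq_square)
qed simp

text \<open>The residual of the projection onto \<open>Y\<^sup>*\<close> is a normal vector of \<open>Y\<^sup>*\<close>, hence of the form \<open>A \<mu>\<close>
  with \<open>\<mu>\<close> sign-compatible at \<open>A\<^sup>T p\<close> and supported on linearly independent columns of \<open>A\<close>.\<close>
lemma projection_residual_representation:
  fixes A :: "real^'n^'m" and y :: "real^'m"
  assumes "\<alpha> > 0" and sol: "P2_solution A b \<alpha> x"
  defines "p \<equiv> closest_point (Ystar A \<alpha> x) y"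
  shows "p \<in> Ystar A \<alpha> x \<and> (\<exists>\<mu>. A *v \<mu> = y - p \<and> sign_compatible (transpose A *v p) x \<mu> \<and>
           (\<forall>\<beta>. (\<forall>j. j \<notin> supp \<mu> \<longrightarrow> \<beta> $ j = 0) \<longrightarrow> A *v \<beta> = 0 \<longrightarrow> \<beta> = 0))"
proof -
  have "polyhedron (Ystar A \<alpha> x)" by (rule Ystar_polyhedron[OF \<open>\<alpha> > 0\<close>])
  then have "closed (Ystar A \<alpha> x)" "convex (Ystar A \<alpha> x)"
    by (simp_all add: polyhedron_imp_closed polyhedron_imp_convex)
  moreover have "Ystar A \<alpha> x \<noteq> {}" by (rule Ystar_nonempty[OF \<open>\<alpha> > 0\<close> sol])
  ultimately have pY: "p \<in> Ystar A \<alpha> x"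
    and "\<And>q. q \<in> Ystar A \<alpha> x \<Longrightarrow> (y - p) \<bullet> (q - p) \<le> 0"
    unfolding p_def by (auto intro: closest_point_in_set closest_point_dot)
  then obtain \<mu>0 where "A *v \<mu>0 = y - p" "sign_compatible (transpose A *v p) x \<mu>0"
    using Ystar_normal_cone[OF \<open>\<alpha> > 0\<close>] by blast
  then show ?thesis
    using pY independent_support_representation[of A \<mu>0 "y - p" "sign_compatible (transpose A *v p) x"]
      sign_compatible_conformal by blast
qed

lemma gradient_agreement_bound:
  fixes A :: "real^'n^'m" and p y :: "real^'m" and \<mu> :: "real^'n"
  defines "w \<equiv> transpose A *v p" and "d \<equiv> transpose A *v (y - p)"
  defines "\<rho> \<equiv> \<chi> j. if d $ j * \<mu> $ j > 0 then d $ j else 0"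
  assumes "\<alpha> > 0" and "A *v x = b" and pY: "p \<in> Ystar A \<alpha> x" and \<mu>: "sign_compatible w x \<mu>"
    and "c \<le> \<alpha>" and c_supp: "\<And>j. x $ j \<noteq> 0 \<Longrightarrow> c \<le> \<alpha> * \<bar>x $ j\<bar> / (\<bar>x $ j\<bar> + 2 * \<alpha>)"
  shows "c * (norm \<rho>)\<^sup>2 \<le> (y - p) \<bullet> grad_f A b \<alpha> y"
proof -
  have "c * (\<rho> $ j)\<^sup>2 \<le> \<alpha> * (d $ j * (soft_thr (w $ j + d $ j) - soft_thr (w $ j)))" for j
  proof (cases "d $ j * \<mu> $ j > 0")
    case True
    have "dual_coord \<alpha> (x $ j) (w $ j)" using pY by (simp add: w_def Ystar_iff[OF \<open>\<alpha> > 0\<close>])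
    then show ?thesis
      using soft_thr_coordinate_bound[OF \<open>\<alpha> > 0\<close> _ \<open>c \<le> \<alpha>\<close> c_supp _ True] \<mu> True
      by (simp add: \<rho>_def sign_compatible_def)
  next
    case False
    have "0 \<le> ((w $ j + d $ j) - w $ j) * (soft_thr (w $ j + d $ j) - soft_thr (w $ j))"
      by (rule soft_thr_monotone_product)
    then have "0 \<le> \<alpha> * (d $ j * (soft_thr (w $ j + d $ j) - soft_thr (w $ j)))"
      using \<open>\<alpha> > 0\<close> by simp
    then show ?thesis using False by (simp add: \<rho>_def)
  qed
  then show ?thesis
    using gradient_inner_Ystar[of A x b p \<alpha> y] assms(5) pY
    unfolding power2_norm_eq_inner inner_vec_sum d_def w_def
    by (auto simp: sum_distrib_left power2_eq_square intro!: sum_mono)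
qed

text \<open>Restricted strong monotonicity of \<open>\<nabla>f\<close> towards the projection onto \<open>Y\<^sup>*\<close>, for any constant
  \<open>c\<close> below \<open>\<alpha>\<close> and below the support ratios \<open>\<alpha>|x\<^sub>i|/(|x\<^sub>i|+2\<alpha>)\<close>: with \<open>v = y - p = A \<mu>\<close>,
  Cauchy--Schwarz gives \<open>|v|\<^sup>2 = \<langle>d, \<mu>\<rangle> \<le> |\<rho>| |\<mu>|\<close> and independence gives \<open>\<lambda>\<^sub>A |\<mu>|\<^sup>2 \<le> |v|\<^sup>2\<close>.\<close>
lemma Ystar_error_bound:
  fixes A :: "real^'n^'m" and y :: "real^'m"
  assumes "\<alpha> > 0" and sol: "P2_solution A b \<alpha> x" and "A \<noteq> 0"
    and "c \<ge> 0" "c \<le> \<alpha>" and c_supp: "\<And>j. x $ j \<noteq> 0 \<Longrightarrow> c \<le> \<alpha> * \<bar>x $ j\<bar> / (\<bar>x $ j\<bar> + 2 * \<alpha>)"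
  defines "p \<equiv> closest_point (Ystar A \<alpha> x) y"
  shows "c * lambda_A A * (norm (y - p))\<^sup>2 \<le> (y - p) \<bullet> grad_f A b \<alpha> y"
proof -
  define v where "v = y - p"
  obtain \<mu> where pY: "p \<in> Ystar A \<alpha> x" and A\<mu>: "A *v \<mu> = v"
    and \<mu>: "sign_compatible (transpose A *v p) x \<mu>"
    and indep: "\<forall>\<beta>. (\<forall>j. j \<notin> supp \<mu> \<longrightarrow> \<beta> $ j = 0) \<longrightarrow> A *v \<beta> = 0 \<longrightarrow> \<beta> = 0"
    using projection_residual_representation[OF \<open>\<alpha> > 0\<close> sol, of y] unfolding p_def v_def by blast
  define d where "d = transpose A *v v"
  define \<rho> :: "real^'n" where "\<rho> = (\<chi> j. if d $ j * \<mu> $ j > 0 then d $ j else 0)"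
  have grad: "c * (norm \<rho>)\<^sup>2 \<le> v \<bullet> grad_f A b \<alpha> y"
    using gradient_agreement_bound[OF \<open>\<alpha> > 0\<close> _ pY \<mu> \<open>c \<le> \<alpha>\<close> c_supp] sol
    unfolding \<rho>_def d_def v_def by (simp add: P2_solution_def)
  have "(norm v)\<^sup>2 \<le> norm \<rho> * norm \<mu>"
  proof -
    have "(norm v)\<^sup>2 = d \<bullet> \<mu>" using A\<mu> by (simp add: d_def power2_norm_eq_inner inner_transpose)
    also have "\<dots> \<le> \<rho> \<bullet> \<mu>" unfolding inner_vec_sum by (intro sum_mono) (auto simp: \<rho>_def)
    also have "\<dots> \<le> norm \<rho> * norm \<mu>" by (rule norm_cauchy_schwarz)
    finally show ?thesis .
  qed
  moreover have "lambda_A A * (norm \<mu>)\<^sup>2 \<le> (norm v)\<^sup>2"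
    using lambda_A_restricted_bound[of "supp \<mu>" \<mu> A] indep A\<mu> by (auto simp: supp_def)
  ultimately have "lambda_A A * (norm v)\<^sup>2 \<le> (norm \<rho>)\<^sup>2"
    using restricted_norm_transfer lambda_A_pos[OF \<open>A \<noteq> 0\<close>] by simp
  then have "c * (lambda_A A * (norm v)\<^sup>2) \<le> c * (norm \<rho>)\<^sup>2"
    using \<open>c \<ge> 0\<close> by (rule mult_left_mono)
  then show ?thesis using grad by (simp add: v_def mult.assoc)
qed

lemma support_ratio_min:
  fixes x :: "real^'n"
  assumes "\<alpha> > 0" "x \<noteq> 0"
  defines "c \<equiv> Min ((\<lambda>i. \<alpha> * \<bar>x $ i\<bar> / (\<bar>x $ i\<bar> + 2 * \<alpha>)) ` supp x)"
  shows "c > 0" and c_supp: "\<And>i. x $ i \<noteq> 0 \<Longrightarrow> c \<le> \<alpha> * \<bar>x $ i\<bar> / (\<bar>x $ i\<bar> + 2 * \<alpha>)"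
    and "c \<le> \<alpha>"
proof -
  have "supp x \<noteq> {}" using assms(2) by (auto simp: supp_def vec_eq_iff)
  then show "c > 0" unfolding c_def using \<open>\<alpha> > 0\<close>
    by (subst Min_gr_iff) (auto simp: supp_def intro!: divide_pos_pos)
  show c_supp: "c \<le> \<alpha> * \<bar>x $ i\<bar> / (\<bar>x $ i\<bar> + 2 * \<alpha>)" if "x $ i \<noteq> 0" for i
    unfolding c_def using that by (intro Min_le) (auto simp: supp_def)
  obtain i where "x $ i \<noteq> 0" using \<open>supp x \<noteq> {}\<close> by (auto simp: supp_def)
  have "\<alpha> * \<bar>x $ i\<bar> / (\<bar>x $ i\<bar> + 2 * \<alpha>) \<le> \<alpha>"
    using \<open>\<alpha> > 0\<close> by (simp add: divide_le_eq add_pos_pos)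
  then show "c \<le> \<alpha>" using c_supp[OF \<open>x $ i \<noteq> 0\<close>] by simp
qed

theorem mainTheorem17:
  fixes A :: "real ^ 'n ^ 'm" and b :: "real ^ 'm" and \<alpha> :: real and xs :: "real ^ 'n"
  assumes "A \<noteq> 0" and "b \<noteq> 0" and "\<exists>x. A *v x = b" and "\<alpha> > 0"
    and "P2_solution A b \<alpha> xs"
  shows "nu_const A \<alpha> xs > 0 \<and>
    (\<forall>y. let p = closest_point (Ystar A \<alpha> xs) y in
          (y - p) \<bullet> grad_f A b \<alpha> y \<ge> nu_const A \<alpha> xs * (norm (y - p))\<^sup>2)"
proof -
  define c where "c = Min ((\<lambda>i. \<alpha> * \<bar>xs $ i\<bar> / (\<bar>xs $ i\<bar> + 2 * \<alpha>)) ` supp xs)"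
  have "xs \<noteq> 0" using assms(2,5) by (auto simp: P2_solution_def)
  note c_bounds = support_ratio_min[OF \<open>\<alpha> > 0\<close> this, folded c_def]
  have nu: "nu_const A \<alpha> xs = c * lambda_A A" by (simp add: nu_const_def c_def)
  show ?thesis
    unfolding nu Let_def
    using c_bounds lambda_A_pos[OF assms(1)]
      Ystar_error_bound[OF \<open>\<alpha> > 0\<close> assms(5,1) _ _ c_bounds(2)] by simp
qed

end
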